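(* Let $G$ act properly on the Borel space $S$ such that the stabilizer $G_{s,s}=\{g\in G:gs=s\}$ is locally closed in $G$ (the intersection of an open and a closed set) for every $s\in S$. Then $G_{s,s}$ is compact for every $s\in S$.
   Context: $G$ is a locally compact second countable Hausdorff group with left Haar measure $\lambda$. $S$ is a Borel space, $G$ acts measurably on $S$, and the action is proper: with $\mu_s$ the image of $\lambda$ under $g\mapsto gs$, there is a measurable partition $B_1,B_2,\dots$ of $S$ such that $\mu_s(B_n)<\infty$ for all $s\in S$, $n\in\mathbb N$. *)

theory Defs
  imports "HOL-Analysis.Analysis"
begin

text \<open>The group G is a type of class topological_group_add (a possibly
non-commutative group, written additively, with jointly continuous
operation and continuous inversion).\<close>

text \<open>Left Haar measure on a locally compact second countable Hausdorff group:
a Borel measure that is left invariant, finite on compact sets and positive on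
nonempty open sets (regularity is automatic in the lcsc setting).\<close>
definition left_haar_measure :: "('g::topological_group_add) measure \<Rightarrow> bool" where
  "left_haar_measure L \<longleftrightarrow>
     sets L = sets borel \<and>
     (\<forall>g A. A \<in> sets borel \<longrightarrow> emeasure L ((\<lambda>x. g + x) ` A) = emeasure L A) \<and>
     (\<forall>K. compact K \<longrightarrow> emeasure L K < \<infinity>) \<and>
     (\<forall>U. open U \<and> U \<noteq> {} \<longrightarrow> emeasure L U > 0)"

text \<open>Borel space (standard Borel space): Borel isomorphic to a Borel subset of [0,1].\<close>
definition borel_space :: "'s measure \<Rightarrow> bool" where
  "borel_space M \<longleftrightarrow>
     (\<exists>f :: 's \<Rightarrow> real. f \<in> M \<rightarrow>\<^sub>M borel \<and> inj_on f (space M) \<and>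
        f ` space M \<subseteq> {0..1} \<and> f ` space M \<in> sets borel \<and>
        (\<forall>A \<in> sets M. f ` A \<in> sets borel))"

definition measurable_action :: "('g::topological_group_add \<Rightarrow> 's \<Rightarrow> 's) \<Rightarrow> 's measure \<Rightarrow> bool" where
  "measurable_action act M \<longleftrightarrow>
     (\<lambda>(g, s). act g s) \<in> (borel \<Otimes>\<^sub>M M) \<rightarrow>\<^sub>M M \<and>
     (\<forall>s \<in> space M. act 0 s = s) \<and>
     (\<forall>g h. \<forall>s \<in> space M. act (g + h) s = act g (act h s))"

definition proper_action ::
  "('g::topological_group_add) measure \<Rightarrow> ('g \<Rightarrow> 's \<Rightarrow> 's) \<Rightarrow> 's measure \<Rightarrow> bool" where
  "proper_action L act M \<longleftrightarrow>
     (\<exists>B :: nat \<Rightarrow> 's set. (\<forall>n. B n \<in> sets M) \<and> disjoint_family B \<and>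
        (\<Union>n. B n) = space M \<and>
        (\<forall>s \<in> space M. \<forall>n. emeasure (distr L M (\<lambda>g. act g s)) (B n) < \<infinity>))"

definition stabilizer :: "('g \<Rightarrow> 's \<Rightarrow> 's) \<Rightarrow> 's \<Rightarrow> 'g set" where
  "stabilizer act s = {g. act g s = s}"

definition locally_closed :: "('a::topological_space) set \<Rightarrow> bool" where
  "locally_closed A \<longleftrightarrow> (\<exists>U C. open U \<and> closed C \<and> A = U \<inter> C)"

end

theory Submission
  imports Defs
begin

text \<open>The stabilizer H of s is a subgroup, and a locally closed subgroup is closed. Properness
yields a Borel set A = {g. g s \<in> B n} of finite positive Haar measure with A + h = A for all
h \<in> H. Right translation by h carries the left Haar measure L to another left invariant measure,
which by uniqueness of Haar measure (via Weil's formula) is a constant multiple of L; A + h = A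
forces the constant to be 1. If H were not compact, choose a compact K with 0 < L (A \<inter> K) and
arbitrarily many h_i \<in> H with pairwise disjoint translates K + h_i: the sets (A \<inter> K) + h_i lie in
A and all have measure L (A \<inter> K), contradicting L A < \<infinity>.\<close>

lemma image_add_right_eq_vimage:
  fixes h :: "'g::group_add"
  shows "(\<lambda>x. x + h) ` S = (\<lambda>x. x - h) -` S"
  by (force intro: rev_image_eqI[where x = "_ - h"])

lemma image_add_left_eq_vimage:
  fixes g :: "'g::group_add"
  shows "(\<lambda>x. g + x) ` S = (\<lambda>x. - g + x) -` S"
  by (force simp: add.assoc[symmetric] intro: rev_image_eqI[where x = "- g + _"])

lemma sets_borel_image_add_right:
  fixes h :: "'g::topological_group_add"
  assumes "S \<in> sets borel"
  shows "(\<lambda>x. x + h) ` S \<in> sets borel"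
  unfolding image_add_right_eq_vimage
  by (intro measurable_sets_borel[OF borel_measurable_continuous_onI] assms continuous_intros)

lemma sets_borel_image_add_left:
  fixes g :: "'g::topological_group_add"
  assumes "S \<in> sets borel"
  shows "(\<lambda>x. g + x) ` S \<in> sets borel"
  unfolding image_add_left_eq_vimage
  by (intro measurable_sets_borel[OF borel_measurable_continuous_onI] assms continuous_intros)

lemma borel_measurable_pair_measure_borel:
  fixes \<mu> \<nu> :: "'a::second_countable_topology measure"
  assumes "sets \<mu> = sets borel" "sets \<nu> = sets borel" "\<phi> \<in> borel_measurable borel"
  shows "\<phi> \<in> borel_measurable (\<mu> \<Otimes>\<^sub>M \<nu>)"
proof -
  have "sets (\<mu> \<Otimes>\<^sub>M \<nu>) = sets (borel \<Otimes>\<^sub>M borel)"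
    using assms by (intro sets_pair_measure_cong) auto
  also have "\<dots> = sets (borel :: ('a \<times> 'a) measure)"
    by (metis borel_prod)
  finally show ?thesis
    using assms(3) by (subst measurable_cong_sets[OF _ refl])
qed

lemma borel_measurable_continuous_comp:
  assumes "f \<in> borel_measurable borel" "continuous_on UNIV T"
  shows "(\<lambda>x. f (T x)) \<in> borel_measurable borel"
  by (rule measurable_compose[OF borel_measurable_continuous_onI[OF assms(2)] assms(1)])

definition left_invariant_measure :: "'g::topological_group_add measure \<Rightarrow> bool" where
  "left_invariant_measure \<nu> \<longleftrightarrow> sets \<nu> = sets borel \<and>
     (\<forall>g A. A \<in> sets borel \<longrightarrow> emeasure \<nu> ((\<lambda>x. g + x) ` A) = emeasure \<nu> A)"

lemma left_invariant_measureD: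
  assumes "left_invariant_measure \<nu>"
  shows left_invariant_sets: "sets \<nu> = sets borel"
    and left_invariant_space: "space \<nu> = UNIV"
    and left_invariant_emeasure: "A \<in> sets borel \<Longrightarrow> emeasure \<nu> ((\<lambda>x. g + x) ` A) = emeasure \<nu> A"
  using assms sets_eq_imp_space_eq[of \<nu> borel] unfolding left_invariant_measure_def by auto

lemma left_invariant_measurable_add_left:
  assumes "left_invariant_measure \<nu>"
  shows "(\<lambda>y. x + y) \<in> measurable \<nu> borel"
  by (subst measurable_cong_sets[OF left_invariant_sets[OF assms] refl])
    (intro borel_measurable_continuous_onI continuous_intros)

lemma distr_add_left_eq:
  assumes \<nu>: "left_invariant_measure \<nu>"
  shows "distr \<nu> borel (\<lambda>y. x + y) = \<nu>"
proof (rule measure_eqI)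
  show "sets (distr \<nu> borel (\<lambda>y. x + y)) = sets \<nu>"
    using left_invariant_sets[OF \<nu>] by simp
next
  fix A assume "A \<in> sets (distr \<nu> borel (\<lambda>y. x + y))"
  then have A: "A \<in> sets borel" by simp
  have "emeasure (distr \<nu> borel (\<lambda>y. x + y)) A = emeasure \<nu> ((\<lambda>y. x + y) -` A \<inter> space \<nu>)"
    using A by (rule emeasure_distr[OF left_invariant_measurable_add_left[OF \<nu>]])
  also have "(\<lambda>y. x + y) -` A \<inter> space \<nu> = (\<lambda>y. - x + y) ` A"
    by (simp add: image_add_left_eq_vimage left_invariant_space[OF \<nu>])
  finally show "emeasure (distr \<nu> borel (\<lambda>y. x + y)) A = emeasure \<nu> A"
    using left_invariant_emeasure[OF \<nu> A] by simp
qed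

lemma nn_integral_add_left:
  assumes \<nu>: "left_invariant_measure \<nu>" and f: "f \<in> borel_measurable borel"
  shows "(\<integral>\<^sup>+y. f (x + y) \<partial>\<nu>) = (\<integral>\<^sup>+y. f y \<partial>\<nu>)"
proof -
  have "(\<integral>\<^sup>+y. f y \<partial>\<nu>) = (\<integral>\<^sup>+y. f y \<partial>distr \<nu> borel (\<lambda>y. x + y))"
    by (simp add: distr_add_left_eq[OF \<nu>])
  also have "\<dots> = (\<integral>\<^sup>+y. f (x + y) \<partial>\<nu>)"
    using f by (intro nn_integral_distr left_invariant_measurable_add_left[OF \<nu>]) simp
  finally show ?thesis ..
qed

lemma nn_integral_shear:
  fixes \<mu> \<nu> :: "'g::{topological_group_add, second_countable_topology} measure"
  assumes \<mu>: "left_invariant_measure \<mu>" "sigma_finite_measure \<mu>"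
    and \<nu>: "left_invariant_measure \<nu>" "sigma_finite_measure \<nu>"
    and \<phi>: "\<phi> \<in> borel_measurable borel"
  shows "(\<integral>\<^sup>+x. \<integral>\<^sup>+y. \<phi> (y + x, - x) \<partial>\<nu> \<partial>\<mu>) = (\<integral>\<^sup>+x. \<integral>\<^sup>+y. \<phi> (x, y) \<partial>\<nu> \<partial>\<mu>)"
proof -
  interpret pair_sigma_finite \<mu> \<nu>
    using \<mu>(2) \<nu>(2) by (simp add: pair_sigma_finite_def)
  \<comment> \<open>in terms of \<psi> the shear becomes a left translation in one variable at a time\<close>
  define \<psi> where "\<psi> p = \<phi> (fst p, - fst p + snd p)" for p
  have \<psi>: "\<psi> \<in> borel_measurable borel"
    unfolding \<psi>_def by (rule borel_measurable_continuous_comp[OF \<phi>]) (intro continuous_intros)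
  have \<psi>_sheared: "case_prod (\<lambda>x y. \<psi> (y + x, y)) \<in> borel_measurable (\<mu> \<Otimes>\<^sub>M \<nu>)"
    unfolding case_prod_beta'
    by (intro borel_measurable_pair_measure_borel left_invariant_sets \<mu> \<nu>
        borel_measurable_continuous_comp[OF \<psi>, of "\<lambda>p. (snd p + fst p, snd p)", simplified] continuous_intros)
  have \<psi>_pair: "case_prod (\<lambda>x y. \<psi> (x, y)) \<in> borel_measurable (\<mu> \<Otimes>\<^sub>M \<nu>)"
    using \<psi> by (simp add: borel_measurable_pair_measure_borel left_invariant_sets \<mu> \<nu>)
  have \<psi>_sections:
    "(\<lambda>x. \<psi> (x, y)) \<in> borel_measurable borel" "(\<lambda>y. \<psi> (x, y)) \<in> borel_measurable borel" for x y by (rule borel_measurable_continuous_comp[OF \<psi>], intro continuous_intros)+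
  have "(\<integral>\<^sup>+x. \<integral>\<^sup>+y. \<phi> (y + x, - x) \<partial>\<nu> \<partial>\<mu>) = (\<integral>\<^sup>+x. \<integral>\<^sup>+y. \<psi> (y + x, y) \<partial>\<nu> \<partial>\<mu>)"
    by (simp add: \<psi>_def minus_add add.assoc)
  also have "\<dots> = (\<integral>\<^sup>+y. \<integral>\<^sup>+x. \<psi> (y + x, y) \<partial>\<mu> \<partial>\<nu>)"
    using Fubini'[OF \<psi>_sheared] by simp
  also have "\<dots> = (\<integral>\<^sup>+y. \<integral>\<^sup>+x. \<psi> (x, y) \<partial>\<mu> \<partial>\<nu>)"
    by (rule nn_integral_cong, rule nn_integral_add_left[OF \<mu>(1) \<psi>_sections(1)])
  also have "\<dots> = (\<integral>\<^sup>+x. \<integral>\<^sup>+y. \<psi> (x, y) \<partial>\<nu> \<partial>\<mu>)"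
    using Fubini'[OF \<psi>_pair] by simp
  also have "\<dots> = (\<integral>\<^sup>+x. \<integral>\<^sup>+y. \<psi> (x, x + y) \<partial>\<nu> \<partial>\<mu>)"
    by (rule nn_integral_cong, rule nn_integral_add_left[OF \<nu>(1) \<psi>_sections(2), symmetric])
  also have "\<dots> = (\<integral>\<^sup>+x. \<integral>\<^sup>+y. \<phi> (x, y) \<partial>\<nu> \<partial>\<mu>)"
    by (simp add: \<psi>_def add.assoc[symmetric])
  finally show ?thesis .
qed

lemma emeasure_vimage_add_right_eq_nn_integral:
  fixes \<nu> :: "'g::topological_group_add measure"
  assumes \<nu>: "sets \<nu> = sets borel" and E: "E \<in> sets borel"
  shows "emeasure \<nu> ((\<lambda>y. y + x) -` E) = (\<integral>\<^sup>+y. indicator E (y + x) \<partial>\<nu>)"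
proof -
  have "(\<lambda>y. y + x) -` E \<in> sets \<nu>"
    using E unfolding \<nu> by (intro measurable_sets_borel[OF borel_measurable_continuous_onI] continuous_intros)
  then show ?thesis
    by (simp only: nn_integral_indicator[symmetric] indicator_vimage)
qed

lemma borel_measurable_emeasure_vimage_add_right:
  fixes \<nu> :: "'g::{topological_group_add, second_countable_topology} measure"
  assumes \<nu>: "sets \<nu> = sets borel" "sigma_finite_measure \<nu>" and E: "E \<in> sets borel"
  shows "(\<lambda>x. emeasure \<nu> ((\<lambda>y. y + x) -` E)) \<in> borel_measurable borel"
proof -
  have "(\<lambda>p. indicator E (snd p + fst p) :: ennreal) \<in> borel_measurable borel"
    by (rule borel_measurable_continuous_comp[OF borel_measurable_indicator[OF E]])
      (intro continuous_intros)
  then have "(\<lambda>(x, y). indicator E (y + x) :: ennreal) \<in> borel_measurable (borel \<Otimes>\<^sub>M \<nu>)"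
    using borel_measurable_pair_measure_borel[OF refl \<nu>(1)] by (simp add: case_prod_beta')
  then show ?thesis
    unfolding emeasure_vimage_add_right_eq_nn_integral[OF \<nu>(1) E]
    by (rule sigma_finite_measure.borel_measurable_nn_integral[OF \<nu>(2)])
qed

lemma left_invariant_emeasure_factorization:
  fixes \<mu> \<nu> :: "'g::{topological_group_add, second_countable_topology} measure"
  assumes \<mu>: "left_invariant_measure \<mu>" "sigma_finite_measure \<mu>"
    and \<nu>: "left_invariant_measure \<nu>" "sigma_finite_measure \<nu>"
    and E: "E \<in> sets borel"
    and E_pos: "\<And>x. 0 < emeasure \<nu> ((\<lambda>y. y + x) -` E)"
    and E_fin: "\<And>x. emeasure \<nu> ((\<lambda>y. y + x) -` E) < \<infinity>"
    and D: "D \<in> sets borel"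
  shows "emeasure \<mu> D =
    emeasure \<mu> E * (\<integral>\<^sup>+y. indicator D (- y) / emeasure \<nu> ((\<lambda>z. z - y) -` E) \<partial>\<nu>)"
proof -
  define r where "r x = emeasure \<nu> ((\<lambda>y. y + x) -` E)" for x
  have r_eq: "r x = (\<integral>\<^sup>+y. indicator E (y + x) \<partial>\<nu>)" for x
    unfolding r_def by (rule emeasure_vimage_add_right_eq_nn_integral[OF left_invariant_sets[OF \<nu>(1)] E])
  have r: "r \<in> borel_measurable borel"
    unfolding r_def[abs_def]
    by (rule borel_measurable_emeasure_vimage_add_right[OF left_invariant_sets[OF \<nu>(1)] \<nu>(2) E])
  define g where "g x = indicator D x / r x" for x
  have g: "g \<in> borel_measurable borel"
    unfolding g_def using r D by measurable
  have g_neg: "(\<lambda>y. g (- y)) \<in> borel_measurable \<nu>"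
    by (subst measurable_cong_sets[OF left_invariant_sets[OF \<nu>(1)] refl])
      (rule borel_measurable_continuous_comp[OF g], intro continuous_intros)
  \<comment> \<open>integrating \<phi> (y + x, - x) in y gives indicator D x, while \<phi> itself is a product\<close>
  define \<phi> where "\<phi> p = g (- snd p) * indicator E (fst p)" for p :: "'g \<times> 'g"
  have \<phi>: "\<phi> \<in> borel_measurable borel"
    unfolding \<phi>_def
    by (intro borel_measurable_times_ennreal borel_measurable_continuous_comp[OF g]
        borel_measurable_continuous_comp[OF borel_measurable_indicator[OF E]] continuous_intros)
  have "emeasure \<mu> D = (\<integral>\<^sup>+x. g x * r x \<partial>\<mu>)"
  proof -
    have "g x * r x = indicator D x" for x
      using E_pos[of x] E_fin[of x] by (simp add: g_def r_def ennreal_divide_times)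
    then show ?thesis
      using D by (simp add: left_invariant_sets[OF \<mu>(1)])
  qed
  also have "\<dots> = (\<integral>\<^sup>+x. \<integral>\<^sup>+y. \<phi> (y + x, - x) \<partial>\<nu> \<partial>\<mu>)"
  proof (rule nn_integral_cong)
    fix x
    have "(\<lambda>y. indicator E (y + x) :: ennreal) \<in> borel_measurable \<nu>"
      by (subst measurable_cong_sets[OF left_invariant_sets[OF \<nu>(1)] refl])
        (rule borel_measurable_continuous_comp[OF borel_measurable_indicator[OF E]], intro continuous_intros)
    then show "g x * r x = (\<integral>\<^sup>+y. \<phi> (y + x, - x) \<partial>\<nu>)"
      by (simp add: \<phi>_def r_eq nn_integral_cmult)
  qed
  also have "\<dots> = (\<integral>\<^sup>+x. \<integral>\<^sup>+y. \<phi> (x, y) \<partial>\<nu> \<partial>\<mu>)"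
    by (rule nn_integral_shear[OF \<mu> \<nu> \<phi>])
  also have "\<dots> = (\<integral>\<^sup>+x. indicator E x * (\<integral>\<^sup>+y. g (- y) \<partial>\<nu>) \<partial>\<mu>)"
    by (simp add: \<phi>_def nn_integral_cmult[OF g_neg] mult.commute)
  also have "\<dots> = emeasure \<mu> E * (\<integral>\<^sup>+y. g (- y) \<partial>\<nu>)"
    using E left_invariant_sets[OF \<mu>(1)]
    by (simp add: nn_integral_multc[OF borel_measurable_indicator])
  finally show ?thesis
    by (simp add: g_def r_def)
qed

lemma left_invariant_measures_proportional:
  fixes \<mu> \<nu> :: "'g::{topological_group_add, second_countable_topology} measure"
  assumes \<mu>: "left_invariant_measure \<mu>" "sigma_finite_measure \<mu>"
    and \<nu>: "left_invariant_measure \<nu>" "sigma_finite_measure \<nu>"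
    and E: "E \<in> sets borel"
    and E_pos: "\<And>x. 0 < emeasure \<nu> ((\<lambda>y. y + x) -` E)"
    and E_fin: "\<And>x. emeasure \<nu> ((\<lambda>y. y + x) -` E) < \<infinity>"
    and D: "D \<in> sets borel"
  shows "emeasure \<mu> D * emeasure \<nu> E = emeasure \<nu> D * emeasure \<mu> E"
  using left_invariant_emeasure_factorization[OF \<mu> \<nu> E E_pos E_fin D]
    left_invariant_emeasure_factorization[OF \<nu> \<nu> E E_pos E_fin D]
  by (simp add: ac_simps)

lemma emeasure_distr_add_right:
  fixes L :: "'g::topological_group_add measure"
  assumes L: "left_invariant_measure L" and S: "S \<in> sets borel"
  shows "emeasure (distr L borel (\<lambda>x. x - h)) S = emeasure L ((\<lambda>x. x + h) ` S)"
proof -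
  have "(\<lambda>x. x - h) \<in> L \<rightarrow>\<^sub>M borel"
    by (subst measurable_cong_sets[OF left_invariant_sets[OF L] refl])
      (intro borel_measurable_continuous_onI continuous_intros)
  then show ?thesis
    using S by (simp add: emeasure_distr image_add_right_eq_vimage left_invariant_space[OF L])
qed

lemma left_invariant_distr_add_right:
  fixes L :: "'g::topological_group_add measure"
  assumes L: "left_invariant_measure L"
  shows "left_invariant_measure (distr L borel (\<lambda>x. x - h))"
  unfolding left_invariant_measure_def
proof (intro conjI allI impI)
  show "sets (distr L borel (\<lambda>x. x - h)) = sets borel"
    by simp
  fix g and S :: "'g set"
  assume S: "S \<in> sets borel"
  have "(\<lambda>x. x + h) ` (\<lambda>x. g + x) ` S = (\<lambda>x. g + x) ` (\<lambda>x. x + h) ` S"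
    by (simp add: image_image add.assoc)
  then show "emeasure (distr L borel (\<lambda>x. x - h)) ((\<lambda>x. g + x) ` S) =
      emeasure (distr L borel (\<lambda>x. x - h)) S"
    using S by (simp add: emeasure_distr_add_right[OF L] sets_borel_image_add_left
        sets_borel_image_add_right left_invariant_emeasure[OF L])
qed

lemma locally_compact_openE:
  fixes x :: "'a::topological_space"
  assumes "locally_compact_space (euclidean :: 'a topology)"
  obtains U K where "open U" "compact K" "x \<in> U" "U \<subseteq> K"
  using assms unfolding locally_compact_space_def by (simp add: open_openin[symmetric]) blast

lemma locally_compact_imp_sigma_compact:
  assumes "locally_compact_space (euclidean :: 'a::second_countable_topology topology)"
  obtains K :: "nat \<Rightarrow> 'a::second_countable_topology set"
  where "\<And>n. compact (K n)" "(\<Union>n. K n) = UNIV"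
proof -
  define \<U> where "\<U> = {U :: 'a set. open U \<and> (\<exists>K. compact K \<and> U \<subseteq> K)}"
  have "x \<in> \<Union>\<U>" for x :: 'a
  proof -
    obtain U K where "open U" "compact K" "x \<in> U" "U \<subseteq> K"
      using locally_compact_openE[OF assms] .
    then show ?thesis unfolding \<U>_def by blast
  qed
  then have cover: "\<Union>\<U> = UNIV" by blast
  obtain \<U>' where \<U>': "\<U>' \<subseteq> \<U>" "countable \<U>'" "\<Union>\<U>' = \<Union>\<U>"
    using Lindelof[of \<U>] by (auto simp: \<U>_def)
  have "\<U>' \<noteq> {}"
    using cover \<U>'(3) by auto
  have "\<forall>U\<in>\<U>'. \<exists>K. compact K \<and> U \<subseteq> K"
    using \<U>'(1) unfolding \<U>_def by blast
  then obtain k where k: "\<forall>U\<in>\<U>'. compact (k U) \<and> U \<subseteq> k U"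
    by (rule bchoice[THEN exE])
  show ?thesis
  proof
    show "compact (k (from_nat_into \<U>' n))" for n
      using k from_nat_into[OF \<open>\<U>' \<noteq> {}\<close>, of n] by simp
    show "(\<Union>n. k (from_nat_into \<U>' n)) = UNIV"
    proof (intro set_eqI iffI)
      fix x
      have "x \<in> \<Union>\<U>'"
        using cover \<U>'(3) by simp
      then obtain U where U: "U \<in> \<U>'" "x \<in> U"
        by blast
      obtain n where n: "U = from_nat_into \<U>' n"
        using U(1) range_from_nat_into[OF \<open>\<U>' \<noteq> {}\<close> \<U>'(2)] by (metis rangeE)
      have "x \<in> k (from_nat_into \<U>' n)"
        using k U unfolding n by auto
      then show "x \<in> (\<Union>n. k (from_nat_into \<U>' n))"
        by (rule UN_I[OF UNIV_I])
    qed simp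
  qed
qed

lemma sigma_finite_if_finite_on_compacts:
  fixes \<mu> :: "'a::{t2_space, second_countable_topology} measure"
  assumes "locally_compact_space (euclidean :: 'a topology)"
    and "sets \<mu> = sets borel" and "\<And>K. compact K \<Longrightarrow> emeasure \<mu> K < \<infinity>"
  shows "sigma_finite_measure \<mu>"
proof -
  obtain K :: "nat \<Rightarrow> 'a set" where K: "\<And>n. compact (K n)" "(\<Union>n. K n) = UNIV"
    using locally_compact_imp_sigma_compact[OF assms(1)] by blast
  show ?thesis
    unfolding sigma_finite_measure_def
  proof (intro exI[of _ "range K"] conjI ballI)
    show "range K \<subseteq> sets \<mu>"
      using K(1) by (auto simp: assms(2) borel_compact)
    show "\<Union>(range K) = space \<mu>"
      using K(2) sets_eq_imp_space_eq[OF assms(2)] by simp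
    show "emeasure \<mu> A \<noteq> \<infinity>" if "A \<in> range K" for A
      using that assms(3)[OF K(1)] by (metis less_irrefl rangeE)
  qed simp
qed

lemma left_haar_measureD:
  assumes "left_haar_measure L"
  shows left_haar_imp_left_invariant: "left_invariant_measure L"
    and left_haar_compact_finite: "compact K \<Longrightarrow> emeasure L K < \<infinity>"
    and left_haar_open_pos: "open U \<Longrightarrow> U \<noteq> {} \<Longrightarrow> 0 < emeasure L U"
  using assms unfolding left_haar_measure_def left_invariant_measure_def by auto

lemma left_haar_sigma_finite:
  fixes L :: "'g::{topological_group_add, t2_space, second_countable_topology} measure"
  assumes "locally_compact_space (euclidean :: 'g topology)" and "left_haar_measure L"
  shows "sigma_finite_measure L"
  by (rule sigma_finite_if_finite_on_compacts[OF assms(1)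
        left_invariant_sets[OF left_haar_imp_left_invariant[OF assms(2)]]
        left_haar_compact_finite[OF assms(2)]])

lemma left_haar_vimage_add_right_open:
  fixes L :: "'g::{topological_group_add, t2_space} measure"
  assumes L: "left_haar_measure L"
    and U: "open U" "U \<noteq> {}" and K: "compact K" "U \<subseteq> K"
  shows "0 < emeasure L ((\<lambda>y. y + x) -` U)" and "emeasure L ((\<lambda>y. y + x) -` U) < \<infinity>"
proof -
  obtain u where "u \<in> U" using U(2) by blast
  then have "u - x \<in> (\<lambda>y. y + x) -` U"
    by simp
  moreover have "open ((\<lambda>y. y + x) -` U)"
    using U(1) by (intro open_vimage continuous_intros)
  ultimately show "0 < emeasure L ((\<lambda>y. y + x) -` U)"
    using left_haar_open_pos[OF L] by blast
  have "(\<lambda>y. y + x) -` U \<subseteq> (\<lambda>k. k - x) ` K"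
    using K(2) by (force intro: rev_image_eqI[where x = "_ + x"])
  moreover have "compact ((\<lambda>k. k - x) ` K)"
    using K(1) by (intro compact_continuous_image continuous_intros)
  ultimately have "emeasure L ((\<lambda>y. y + x) -` U) \<le> emeasure L ((\<lambda>k. k - x) ` K)"
    using left_invariant_sets[OF left_haar_imp_left_invariant[OF L]]
    by (intro emeasure_mono) (auto simp: borel_compact)
  also have "\<dots> < \<infinity>"
    by (rule left_haar_compact_finite[OF L \<open>compact ((\<lambda>k. k - x) ` K)\<close>])
  finally show "emeasure L ((\<lambda>y. y + x) -` U) < \<infinity>" .
qed

lemma left_haar_right_translate:
  fixes L :: "'g::{topological_group_add, t2_space, second_countable_topology} measure"
  assumes lc: "locally_compact_space (euclidean :: 'g topology)" and L: "left_haar_measure L"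
    and A: "A \<in> sets borel" "0 < emeasure L A" "emeasure L A < \<infinity>"
    and A_h: "emeasure L ((\<lambda>a. a + h) ` A) = emeasure L A"
    and D: "D \<in> sets borel"
  shows "emeasure L ((\<lambda>d. d + h) ` D) = emeasure L D"
proof -
  have L_inv: "left_invariant_measure L" and L_fin: "sigma_finite_measure L"
    using left_haar_imp_left_invariant[OF L] left_haar_sigma_finite[OF lc L] .
  \<comment> \<open>N S = L (S + h) is left invariant, hence proportional to L; A fixes the factor to 1\<close>
  define N where "N = distr L borel (\<lambda>x. x - h)"
  have N_eq: "emeasure N S = emeasure L ((\<lambda>x. x + h) ` S)" if "S \<in> sets borel" for S
    unfolding N_def by (rule emeasure_distr_add_right[OF L_inv that])
  have N_inv: "left_invariant_measure N"
    unfolding N_def by (rule left_invariant_distr_add_right[OF L_inv])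
  have N_fin: "sigma_finite_measure N"
  proof (rule sigma_finite_if_finite_on_compacts[OF lc left_invariant_sets[OF N_inv]])
    fix K :: "'g set" assume "compact K"
    moreover have "compact ((\<lambda>x. x + h) ` K)"
      using \<open>compact K\<close> by (intro compact_continuous_image continuous_intros)
    ultimately show "emeasure N K < \<infinity>"
      using left_haar_compact_finite[OF L] by (simp add: N_eq borel_compact)
  qed
  obtain U K where U: "open U" "compact K" "(0::'g) \<in> U" "U \<subseteq> K"
    by (rule locally_compact_openE[OF lc])
  have U_borel: "U \<in> sets borel"
    using U(1) by simp
  have "U \<noteq> {}"
    using U(3) by blast
  note U_pos = left_haar_vimage_add_right_open(1)[OF L U(1) \<open>U \<noteq> {}\<close> U(2,4)]
  note U_fin = left_haar_vimage_add_right_open(2)[OF L U(1) \<open>U \<noteq> {}\<close> U(2,4)]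
  have proportional: "emeasure N S * emeasure L U = emeasure L S * emeasure N U" if "S \<in> sets borel" for S
    by (rule left_invariant_measures_proportional[OF N_inv N_fin L_inv L_fin U_borel U_pos U_fin that])
  have LU: "emeasure L U \<noteq> 0" "emeasure L U \<noteq> \<infinity>"
    using U_pos[of 0] U_fin[of 0] by auto
  have "emeasure N A = emeasure L A"
    using A_h by (simp add: N_eq A(1))
  then have "emeasure L A * emeasure L U = emeasure L A * emeasure N U"
    using proportional[OF A(1)] by simp
  then have NU: "emeasure N U = emeasure L U"
    using A(2,3) by (auto simp: ennreal_mult_cancel_left)
  have "emeasure L U * emeasure N D = emeasure L U * emeasure L D"
    using proportional[OF D] by (simp add: NU mult.commute)
  then have "emeasure N D = emeasure L D"
    using LU by (simp add: ennreal_mult_cancel_left)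
  then show ?thesis
    by (simp add: N_eq D)
qed

lemma ennreal_multiples_bounded_imp_zero:
  fixes a d :: ennreal
  assumes "\<And>m::nat. of_nat m * d \<le> a" and "a < \<infinity>"
  shows "d = 0"
proof -
  have "top * d = (SUP m. of_nat m) * d"
    by (simp add: ennreal_SUP_of_nat_eq_top)
  also have "\<dots> = (SUP m. of_nat m * d)"
    by (rule SUP_mult_right_ennreal)
  also have "\<dots> \<le> a"
    using assms(1) by (rule SUP_least)
  finally show ?thesis
    using assms(2) by (auto simp: ennreal_top_mult split: if_splits)
qed

lemma emeasure_Int_pos_cover:
  fixes B :: "nat \<Rightarrow> 'a set"
  assumes "0 < emeasure \<mu> A" "A \<in> sets \<mu>" "A \<subseteq> (\<Union>n. B n)" "\<And>n. B n \<in> sets \<mu>"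
  obtains n where "0 < emeasure \<mu> (A \<inter> B n)"
proof (rule ccontr)
  assume "\<not> thesis"
  then have "emeasure \<mu> (A \<inter> B n) = 0" for n
    using that \<open>\<not> thesis\<close> not_gr_zero by blast
  then have "emeasure \<mu> (\<Union>n. A \<inter> B n) = 0"
    using assms(2,4) by (intro emeasure_UN_eq_0) (auto intro: sets.Int)
  moreover have "(\<Union>n. A \<inter> B n) = A"
    using assms(3) by blast
  ultimately show False
    using assms(1) by simp
qed

lemma locally_closed_subgroup_closed:
  fixes H :: "'g::topological_group_add set"
  assumes lc: "locally_closed H" and zero: "0 \<in> H"
    and add: "\<And>a b. a \<in> H \<Longrightarrow> b \<in> H \<Longrightarrow> a + b \<in> H"
    and uminus: "\<And>a. a \<in> H \<Longrightarrow> - a \<in> H"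
  shows "closed H"
proof -
  obtain U C where UC: "open U" "closed C" "H = U \<inter> C"
    using lc unfolding locally_closed_def by blast
  have "x \<in> H" if x: "x \<in> closure H" for x
  proof -
    have "open ((\<lambda>y. - y + x) -` U)"
      using UC(1) by (intro open_vimage continuous_intros)
    moreover have "x \<in> (\<lambda>y. - y + x) -` U"
      using zero UC(3) by auto
    ultimately obtain h where h: "h \<in> H" "- h + x \<in> U"
      using x unfolding closure_iff_nhds_not_empty by blast
    have "(\<lambda>t. - h + t) ` H \<subseteq> C"
      using h(1) add uminus UC(3) by auto
    then have "(\<lambda>t. - h + t) ` closure H \<subseteq> C"
      by (intro image_closure_subset[OF _ UC(2)] continuous_intros)
    then have "- h + x \<in> H"
      using x h(2) UC(3) by auto
    from add[OF h(1) this] show "x \<in> H"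
      by (simp add: add.assoc[symmetric])
  qed
  then show ?thesis
    using closure_subset_eq by blast
qed

lemma closed_noncompact_disjoint_translates:
  fixes H C :: "'g::{topological_group_add, t2_space} set"
  assumes C: "compact C" and H: "closed H" "\<not> compact H"
  shows "\<exists>F\<subseteq>H. finite F \<and> card F = n \<and> disjoint_family_on (\<lambda>f. (\<lambda>c. c + f) ` C) F"
proof (induction n)
  case 0
  show ?case
    by (intro exI[of _ "{}"]) (auto simp: disjoint_family_on_def)
next
  case (Suc n)
  then obtain F where F: "F \<subseteq> H" "finite F" "card F = n"
    "disjoint_family_on (\<lambda>f. (\<lambda>c. c + f) ` C) F"
    by blast
  \<comment> \<open>any h \<notin> T lies outside F and C + h misses C + f for every f \<in> F\<close>
  define T where "T = F \<union> (\<Union>f\<in>F. (\<lambda>p. - snd p + fst p + f) ` (C \<times> C))"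
  have "compact T"
    unfolding T_def using F(2) C
    by (intro compact_Un[OF finite_imp_compact] compact_UN compact_continuous_image compact_Times
        continuous_intros)
  then have "\<not> H \<subseteq> T"
    using H by (metis closed_Int_compact inf.absorb_iff1)
  then obtain h where h: "h \<in> H" "h \<notin> T"
    by blast
  have "(\<lambda>c. c + h) ` C \<inter> (\<lambda>c. c + f) ` C = {}" if f: "f \<in> F" for f
  proof (rule ccontr)
    assume "(\<lambda>c. c + h) ` C \<inter> (\<lambda>c. c + f) ` C \<noteq> {}"
    then obtain c c' where cc: "c \<in> C" "c' \<in> C" "c + h = c' + f"
      by auto
    then have "h = - c + c' + f"
      by (metis add.assoc add_minus_cancel)
    moreover have "- c + c' + f \<in> T"
      unfolding T_def using f cc by (force intro: rev_image_eqI[of "(c', c)"])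
    ultimately show False
      using h(2) by simp
  qed
  moreover have "h \<notin> F"
    using h(2) by (simp add: T_def)
  ultimately show ?case
    using F h(1) by (intro exI[of _ "insert h F"]) (auto simp: disjoint_family_on_insert)
qed

lemma left_haar_right_periods_compact:
  fixes L :: "'g::{topological_group_add, t2_space, second_countable_topology} measure"
  assumes lc: "locally_compact_space (euclidean :: 'g topology)" and L: "left_haar_measure L"
    and A: "A \<in> sets borel" "0 < emeasure L A" "emeasure L A < \<infinity>"
    and H: "closed H" and periods: "\<And>h. h \<in> H \<Longrightarrow> (\<lambda>a. a + h) ` A = A"
  shows "compact H"
proof (rule ccontr)
  assume noncompact: "\<not> compact H"
  have sets_L: "sets L = sets borel"
    using left_invariant_sets[OF left_haar_imp_left_invariant[OF L]] .
  obtain K :: "nat \<Rightarrow> 'g set" where K: "\<And>k. compact (K k)" "(\<Union>k. K k) = UNIV"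
    using locally_compact_imp_sigma_compact[OF lc] by blast
  have "A \<in> sets L" "K k \<in> sets L" for k
    using A(1) K(1) by (auto simp: sets_L borel_compact)
  then obtain k where D_pos: "0 < emeasure L (A \<inter> K k)"
    using emeasure_Int_pos_cover[OF A(2)] K(2) by blast
  define D where "D = A \<inter> K k"
  have D: "D \<in> sets borel"
    unfolding D_def using A(1) borel_compact[OF K(1)] by (rule sets.Int)
  have D_translate: "emeasure L ((\<lambda>d. d + h) ` D) = emeasure L D" if "h \<in> H" for h
    using periods[OF that] by (intro left_haar_right_translate[OF lc L A _ D]) simp
  have "of_nat m * emeasure L D \<le> emeasure L A" for m
  proof -
    obtain F where F: "F \<subseteq> H" "finite F" "card F = m"
      and disjoint: "disjoint_family_on (\<lambda>f. (\<lambda>c. c + f) ` K k) F"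
      using closed_noncompact_disjoint_translates[OF K(1) H noncompact] by blast
    have "of_nat m * emeasure L D = (\<Sum>f\<in>F. emeasure L ((\<lambda>d. d + f) ` D))"
      using F D_translate by (simp add: subset_eq)
    also have "\<dots> = emeasure L (\<Union>f\<in>F. (\<lambda>d. d + f) ` D)"
      using disjoint F(2) D
      by (intro sum_emeasure) (auto simp: sets_L sets_borel_image_add_right disjoint_family_on_def D_def)
    also have "\<dots> \<le> emeasure L A"
      using F(1) periods A(1) by (intro emeasure_mono) (auto simp: sets_L D_def)
    finally show ?thesis .
  qed
  then have "emeasure L D = 0"
    using A(3) by (rule ennreal_multiples_bounded_imp_zero)
  then show False
    using D_pos by (simp add: D_def)
qed

lemma measurable_actionD:
  assumes "measurable_action act M" and "s \<in> space M"
  shows measurable_action_zero: "act 0 s = s"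
    and measurable_action_add: "act (g + h) s = act g (act h s)"
  using assms unfolding measurable_action_def by auto

lemma measurable_action_orbit:
  assumes act: "measurable_action act M" and s: "s \<in> space M"
  shows "(\<lambda>g. act g s) \<in> borel \<rightarrow>\<^sub>M M"
proof -
  have pair: "(\<lambda>g. (g, s)) \<in> borel \<rightarrow>\<^sub>M borel \<Otimes>\<^sub>M M"
    using s by measurable
  have "(\<lambda>(g, s). act g s) \<in> borel \<Otimes>\<^sub>M M \<rightarrow>\<^sub>M M"
    using act unfolding measurable_action_def by blast
  from measurable_comp[OF pair this] show ?thesis
    by (simp add: comp_def)
qed

lemma stabilizer_subgroup:
  assumes act: "measurable_action act M" and s: "s \<in> space M"
  shows stabilizer_zero: "0 \<in> stabilizer act s"
    and stabilizer_add: "a \<in> stabilizer act s \<Longrightarrow> b \<in> stabilizer act s \<Longrightarrow> a + b \<in> stabilizer act s"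
    and stabilizer_uminus: "a \<in> stabilizer act s \<Longrightarrow> - a \<in> stabilizer act s"
  using measurable_action_zero[OF act s] measurable_action_add[OF act s, of "- a" a]
    measurable_action_add[OF act s, of a b]
  by (simp_all add: stabilizer_def)

lemma proper_action_stabilizer_invariant_set:
  fixes L :: "'g::{topological_group_add, second_countable_topology} measure"
    and M :: "'s measure"
  assumes L: "left_haar_measure L" and act: "measurable_action act M"
    and proper: "proper_action L act M" and s: "s \<in> space M"
  obtains A where "A \<in> sets borel" "0 < emeasure L A" "emeasure L A < \<infinity>"
    "\<And>h. h \<in> stabilizer act s \<Longrightarrow> (\<lambda>a. a + h) ` A = A"
proof -
  have sets_L: "sets L = sets borel"
    using left_invariant_sets[OF left_haar_imp_left_invariant[OF L]] .
  note orbit = measurable_action_orbit[OF act s]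
  then have orbit_L: "(\<lambda>g. act g s) \<in> L \<rightarrow>\<^sub>M M"
    by (subst measurable_cong_sets[OF sets_L refl])
  obtain B :: "nat \<Rightarrow> 's set" where B: "\<And>n. B n \<in> sets M" "(\<Union>n. B n) = space M"
    "\<And>n. emeasure (distr L M (\<lambda>g. act g s)) (B n) < \<infinity>"
    using proper s unfolding proper_action_def by blast
  define A where "A n = (\<lambda>g. act g s) -` B n" for n
  have A_borel: "A n \<in> sets borel" for n
    unfolding A_def by (rule measurable_sets_borel[OF orbit B(1)])
  have A_fin: "emeasure L (A n) < \<infinity>" for n
    using B(3)[of n] emeasure_distr[OF orbit_L B(1)[of n]]
    by (simp add: A_def left_invariant_space[OF left_haar_imp_left_invariant[OF L]])
  obtain n where A_pos: "0 < emeasure L (A n)"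
  proof (rule emeasure_Int_pos_cover[of L UNIV A])
    show "0 < emeasure L UNIV"
      using left_haar_open_pos[OF L] by simp
    show "UNIV \<in> sets L" "A n \<in> sets L" for n
      by (simp_all add: sets_L A_borel)
    show "UNIV \<subseteq> (\<Union>n. A n)"
    proof
      fix g
      have "act g s \<in> (\<Union>n. B n)"
        using measurable_space[OF orbit] B(2) by simp
      then show "g \<in> (\<Union>n. A n)"
        by (simp add: A_def)
    qed
  qed (use that in simp)
  have "(\<lambda>a. a + h) ` A n = A n" if "h \<in> stabilizer act s" for h
  proof -
    have "act (x - h) s = act x s" for x
      using stabilizer_uminus[OF act s that] measurable_action_add[OF act s, of x "- h"]
      by (simp add: stabilizer_def)
    then show ?thesis
      by (simp add: image_add_right_eq_vimage A_def vimage_def)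
  qed
  then show ?thesis
    using that A_borel A_pos A_fin by blast
qed

theorem corollary2p5:
  fixes L :: "('g::{topological_group_add, t2_space, second_countable_topology}) measure"
    and M :: "'s measure"
    and act :: "'g \<Rightarrow> 's \<Rightarrow> 's"
  assumes "locally_compact_space (euclidean :: 'g topology)"
    and "left_haar_measure L"
    and "borel_space M"
    and "measurable_action act M"
    and "proper_action L act M"
    and "\<forall>s \<in> space M. locally_closed (stabilizer act s)"
  shows "\<forall>s \<in> space M. compact (stabilizer act s)"
proof
  fix s assume s: "s \<in> space M"
  obtain A where A: "A \<in> sets borel" "0 < emeasure L A" "emeasure L A < \<infinity>"
    and periods: "\<And>h. h \<in> stabilizer act s \<Longrightarrow> (\<lambda>a. a + h) ` A = A"
    using proper_action_stabilizer_invariant_set[OF assms(2,4,5) s] by blast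
  have "closed (stabilizer act s)"
    using assms(6) s
    by (intro locally_closed_subgroup_closed stabilizer_subgroup[OF assms(4) s]) auto
  then show "compact (stabilizer act s)"
    by (rule left_haar_right_periods_compact[OF assms(1,2) A _ periods])
qed

end
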